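(* Let $G_1$ be an FC-group (every element has a centraliser of finite index), let $n,m\ge 0$, let $G\le G_1^n$ be a subgroup, let $w(\bar x,\bar y)$ be a group word in the variables $\bar x=(x_1,\dots,x_n)$, $\bar y=(y_1,\dots,y_m)$ and their inverses, and let $\bar g\in G_1^m$ and $c\in G_1$. If the set $X=\{\bar h\in G: w(\bar h,\bar g)=c\}$ is large in $G$, then $w(\bar h,\bar g)=c$ for all $\bar h\in G$.
   Context: $w(\bar x,\bar g)$ induces a function $G\to G_1$ by substitution. A subset $X\subseteq G$ is $k$-large in $G$ if the intersection of any $k$ left translates $\bar a_1X\cap\dots\cap\bar a_kX$ ($\bar a_i\in G$) is non-empty; $X$ is large in $G$ if it is $k$-large for every $k\ge1$. *)

theory Defs
  imports "HOL-Algebra.Algebra"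
begin

definition centraliser :: "('a, 'b) monoid_scheme \<Rightarrow> 'a \<Rightarrow> 'a set" where
  "centraliser G g = {h \<in> carrier G. h \<otimes>\<^bsub>G\<^esub> g = g \<otimes>\<^bsub>G\<^esub> h}"

definition FC_group :: "('a, 'b) monoid_scheme \<Rightarrow> bool" where
  "FC_group G \<longleftrightarrow> group G \<and>
     (\<forall>g \<in> carrier G. finite (RCOSETS G (centraliser G g)))"

definition pow_group :: "('a, 'b) monoid_scheme \<Rightarrow> nat \<Rightarrow> 'a list monoid" where
  "pow_group G n = \<lparr> carrier = {xs. length xs = n \<and> set xs \<subseteq> carrier G},
                     monoid.mult = (\<lambda>xs ys. map2 (\<otimes>\<^bsub>G\<^esub>) xs ys),
                     monoid.one = replicate n \<one>\<^bsub>G\<^esub> \<rparr>"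

text \<open>Group words: a letter is a variable (Inl i = x_i, Inr j = y_j) with an exponent flag
  (True = inverse). A word is a list of letters.\<close>
type_synonym letter = "(nat + nat) \<times> bool"

definition word_in :: "nat \<Rightarrow> nat \<Rightarrow> letter list \<Rightarrow> bool" where
  "word_in n m w \<longleftrightarrow> (\<forall>(v, e) \<in> set w. case v of Inl i \<Rightarrow> i < n | Inr j \<Rightarrow> j < m)"

fun eval_word :: "('a, 'b) monoid_scheme \<Rightarrow> letter list \<Rightarrow> 'a list \<Rightarrow> 'a list \<Rightarrow> 'a" where
  "eval_word G [] xs ys = \<one>\<^bsub>G\<^esub>"
| "eval_word G ((v, e) # w) xs ys =
     (let a = (case v of Inl i \<Rightarrow> xs ! i | Inr j \<Rightarrow> ys ! j)
      in (if e then inv\<^bsub>G\<^esub> a else a)) \<otimes>\<^bsub>G\<^esub> eval_word G w xs ys"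

definition k_large :: "('a, 'b) monoid_scheme \<Rightarrow> nat \<Rightarrow> 'a set \<Rightarrow> bool" where
  "k_large G k S \<longleftrightarrow> (\<forall>ts. length ts = k \<and> set ts \<subseteq> carrier G \<longrightarrow>
                        (\<Inter>a \<in> set ts. a <#\<^bsub>G\<^esub> S) \<noteq> {})"

definition large :: "('a, 'b) monoid_scheme \<Rightarrow> 'a set \<Rightarrow> bool" where
  "large G S \<longleftrightarrow> (\<forall>k \<ge> 1. k_large G k S)"

end

theory Submission
  imports Defs
begin

(* Fix h in G and let S be the finite set of entries of h and g. Because G1 is an FC-group,
   the tuples of G all of whose entries commute with S form a subgroup H of finite index in G.
   Largeness of X, applied to the finitely many translates t X and t h^-1 X with t running
   through coset representatives of H, produces s in X \<inter> H with h s in X. As the entries of s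
   commute with those of h and g, the x-letters of s can be collected on the right:
   w(h s, g) = w(h, g) u and w(s, g) = w(1, g) u with the same u. Hence w(h, g) = w(1, g)
   for all h in G, and this common value is c because X is non-empty. *)

lemma centraliser_sym:
  "x \<in> carrier G \<Longrightarrow> y \<in> carrier G \<Longrightarrow> x \<in> centraliser G y \<longleftrightarrow> y \<in> centraliser G x"
  by (auto simp: centraliser_def)

lemma (in group) subgroup_centraliser:
  assumes "a \<in> carrier G"
  shows "subgroup (centraliser G a) G"
proof (rule subgroupI)
  show "centraliser G a \<subseteq> carrier G" "centraliser G a \<noteq> {}"
    using assms by (auto simp: centraliser_def)
next
  fix x assume "x \<in> centraliser G a"
  then have x: "x \<in> carrier G" and xa: "x \<otimes> a = a \<otimes> x" by (auto simp: centraliser_def)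
  have "inv x \<otimes> a = inv x \<otimes> (a \<otimes> x) \<otimes> inv x"
    using x assms by (simp add: m_assoc)
  also have "\<dots> = a \<otimes> inv x"
    using x assms by (simp flip: xa m_assoc)
  finally show "inv x \<in> centraliser G a" using x by (simp add: centraliser_def)
next
  fix x y assume "x \<in> centraliser G a" "y \<in> centraliser G a"
  then show "x \<otimes> y \<in> centraliser G a" using assms
    by (auto simp: centraliser_def m_assoc) (metis m_assoc)
qed

lemma eval_word_in_subgroup:
  assumes "subgroup K G" "word_in n m w" "length h = n" "length g = m" "set h \<subseteq> K" "set g \<subseteq> K"
  shows "eval_word G w h g \<in> K"
  using assms(2)
proof (induction w)
  case Nil
  then show ?case using subgroup.one_closed[OF assms(1)] by simp
next
  case (Cons l w)
  obtain v e where l: "l = (v, e)" by fastforce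
  have "(case v of Inl i \<Rightarrow> h ! i | Inr j \<Rightarrow> g ! j) \<in> K"
    using Cons.prems assms(3-6) by (auto simp: l word_in_def split: sum.splits)
  moreover have "eval_word G w h g \<in> K"
    using Cons by (simp add: l word_in_def)
  ultimately show ?case
    using assms(1) by (simp add: l Let_def subgroup.m_closed subgroup.m_inv_closed)
qed

lemma eval_word_closed:
  assumes "group G" "word_in n m w" "length h = n" "length g = m"
    "set h \<subseteq> carrier G" "set g \<subseteq> carrier G"
  shows "eval_word G w h g \<in> carrier G"
  using eval_word_in_subgroup[OF group.subgroup_self[OF assms(1)] assms(2-)] .

lemma word_in_filter: "word_in n m w \<Longrightarrow> word_in n m (filter P w)"
  by (auto simp: word_in_def)

lemma eval_word_mult_centralising:
  fixes G (structure)
  assumes G: "group G" and w: "word_in n m w"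
    and len: "length h = n" "length x = n" "length g = m"
    and carr: "set h \<subseteq> carrier G" "set x \<subseteq> carrier G" "set g \<subseteq> carrier G"
    and centr: "\<forall>a \<in> set h \<union> set g. set x \<subseteq> centraliser G a"
  shows "eval_word G w (map2 (\<otimes>) h x) g =
         eval_word G w h g \<otimes> eval_word G (filter (isl \<circ> fst) w) x g"
  using w
proof (induction w)
  case Nil
  then show ?case using G by (simp add: group.is_monoid)
next
  case (Cons l w)
  interpret group G by (fact G)
  obtain v e where l: "l = (v, e)" by fastforce
  have w': "word_in n m w" using Cons.prems by (simp add: l word_in_def)
  define E where "E = eval_word G w h g"
  define U where "U = eval_word G (filter (isl \<circ> fst) w) x g"
  have E: "E \<in> carrier G" unfolding E_def
    by (rule eval_word_closed[OF G w' len(1,3) carr(1,3)])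
  have U: "U \<in> carrier G" unfolding U_def
    by (rule eval_word_closed[OF G word_in_filter[OF w'] len(2,3) carr(2,3)])
  have IH: "eval_word G w (map2 (\<otimes>) h x) g = E \<otimes> U"
    unfolding E_def U_def by (rule Cons.IH[OF w'])
  show ?case
  proof (cases v)
    case (Inl i)
    have i: "i < n" using Cons.prems by (simp add: l Inl word_in_def)
    define a where "a = h ! i"
    define b where "b = x ! i"
    have a: "a \<in> carrier G" and b: "b \<in> carrier G"
      using i len carr by (auto simp: a_def b_def)
    define a' where "a' = (if e then inv a else a)"
    define b' where "b' = (if e then inv b else b)"
    have a': "a' \<in> carrier G" and b': "b' \<in> carrier G"
      using a b by (auto simp: a'_def b'_def)
    have b'_centr: "b' \<in> centraliser G c" if "c \<in> set h \<union> set g" for c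
    proof -
      have c: "c \<in> carrier G" using that carr by auto
      have "b \<in> centraliser G c" using centr that i len(2) nth_mem[of i x] unfolding b_def by blast
      then show ?thesis
        using subgroup.m_inv_closed[OF subgroup_centraliser[OF c]] by (auto simp: b'_def)
    qed
    have ab: "(if e then inv (a \<otimes> b) else a \<otimes> b) = a' \<otimes> b'"
    proof -
      have "a \<in> centraliser G b'"
        using centraliser_sym[OF b' a] b'_centr[of a] i len by (auto simp: a_def)
      then have "a' \<in> centraliser G b'"
        using subgroup.m_inv_closed[OF subgroup_centraliser[OF b']] by (auto simp: a'_def)
      then have "b' \<otimes> a' = a' \<otimes> b'" by (simp add: centraliser_def)
      then show ?thesis using a b by (auto simp: a'_def b'_def inv_mult_group)
    qed
    have "E \<in> centraliser G b'"
      unfolding E_def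
      by (rule eval_word_in_subgroup[OF subgroup_centraliser[OF b'] w' len(1,3)])
         (use b'_centr centraliser_sym[OF b'] carr in blast)+
    then have Eb': "E \<otimes> b' = b' \<otimes> E" by (simp add: centraliser_def)
    have "eval_word G (l # w) (map2 (\<otimes>) h x) g = a' \<otimes> b' \<otimes> (E \<otimes> U)"
      using i len ab IH by (simp add: l Inl Let_def flip: a_def b_def)
    also have "\<dots> = a' \<otimes> E \<otimes> (b' \<otimes> U)"
      using a' b' E U Eb' by (metis m_assoc m_closed)
    also have "\<dots> = eval_word G (l # w) h g \<otimes> eval_word G (filter (isl \<circ> fst) (l # w)) x g"
      by (simp add: l Inl Let_def a'_def b'_def a_def b_def E_def U_def)
    finally show ?thesis .
  next
    case (Inr j)
    have "g ! j \<in> carrier G" using Cons.prems len carr by (auto simp: l Inr word_in_def)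
    then show ?thesis using IH E U by (simp add: l Inr Let_def m_assoc E_def U_def comp_def)
  qed
qed

lemma pow_group_carrier [simp]:
  "carrier (pow_group G n) = {xs. length xs = n \<and> set xs \<subseteq> carrier G}"
  by (simp add: pow_group_def)

lemma pow_group_mult [simp]: "xs \<otimes>\<^bsub>pow_group G n\<^esub> ys = map2 (\<otimes>\<^bsub>G\<^esub>) xs ys"
  by (simp add: pow_group_def)

lemma pow_group_one [simp]: "\<one>\<^bsub>pow_group G n\<^esub> = replicate n \<one>\<^bsub>G\<^esub>"
  by (simp add: pow_group_def)

lemma (in group) group_pow_group: "group (pow_group G n)"
proof (rule groupI)
  fix xs assume "xs \<in> carrier (pow_group G n)"
  then have "map (m_inv G) xs \<in> carrier (pow_group G n) \<and>
             map (m_inv G) xs \<otimes>\<^bsub>pow_group G n\<^esub> xs = \<one>\<^bsub>pow_group G n\<^esub>"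
    by (auto intro!: nth_equalityI simp: subset_eq all_set_conv_all_nth)
  then show "\<exists>ys \<in> carrier (pow_group G n). ys \<otimes>\<^bsub>pow_group G n\<^esub> xs = \<one>\<^bsub>pow_group G n\<^esub>" by blast
qed (auto intro!: nth_equalityI simp: m_assoc set_zip subset_eq all_set_conv_all_nth)

lemma (in group) pow_group_inv:
  assumes "xs \<in> carrier (pow_group G n)"
  shows "inv\<^bsub>pow_group G n\<^esub> xs = map (m_inv G) xs"
proof (rule group.inv_equality[OF group_pow_group])
  show "map (m_inv G) xs \<otimes>\<^bsub>pow_group G n\<^esub> xs = \<one>\<^bsub>pow_group G n\<^esub>"
    using assms by (auto intro!: nth_equalityI simp: subset_eq all_set_conv_all_nth)
qed (use assms in auto)

lemma large_translates_meet:
  fixes G (structure)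
  assumes "large G S" "finite A" "A \<noteq> {}" "A \<subseteq> carrier G"
  shows "(\<Inter>a \<in> A. a <# S) \<noteq> {}"
proof -
  obtain ts where ts: "set ts = A" using finite_list[OF assms(2)] by blast
  then have "length ts \<ge> 1" using assms(3) by (cases ts) auto
  then show ?thesis using assms(1,4) ts by (auto simp: large_def k_large_def)
qed

lemma large_nonempty:
  assumes "monoid G" "large G S"
  shows "S \<noteq> {}"
  using large_translates_meet[OF assms(2), of "{\<one>\<^bsub>G\<^esub>}"] assms(1)
  by (auto simp: l_coset_def)

lemma (in group) finite_rcosets_by_colouring:
  assumes H: "subgroup H G" and fin: "finite (f ` carrier G)"
    and colour: "\<And>x y. x \<in> carrier G \<Longrightarrow> y \<in> carrier G \<Longrightarrow> f x = f y \<Longrightarrow> x \<otimes> inv y \<in> H"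
  shows "finite (rcosets H)"
proof -
  let ?rep = "inv_into (carrier G) f"
  have "H #> x = H #> ?rep (f x)" if x: "x \<in> carrier G" for x
  proof -
    have rep: "?rep (f x) \<in> carrier G" "f (?rep (f x)) = f x"
      using x by (auto intro: inv_into_into f_inv_into_f)
    then have "?rep (f x) \<in> H #> x"
      using colour[OF rep(1) x] subgroup.rcos_module_rev[OF H is_group x] by simp
    then show ?thesis by (rule repr_independence[OF _ x H])
  qed
  then have "rcosets H \<subseteq> (\<lambda>c. H #> ?rep c) ` f ` carrier G"
    by (auto simp: RCOSETS_def)
  then show ?thesis using fin by (rule finite_subset[OF _ finite_imageI])
qed

lemma (in group) large_common_translate:
  assumes large: "large G S" and S: "S \<subseteq> carrier G"
    and T: "finite T" "T \<noteq> {}" "T \<subseteq> carrier G" and h: "h \<in> carrier G"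
  shows "\<exists>y \<in> carrier G. \<forall>t \<in> T. inv t \<otimes> y \<in> S \<and> h \<otimes> (inv t \<otimes> y) \<in> S"
proof -
  have "(\<Inter>a \<in> T \<union> (\<lambda>t. t \<otimes> inv h) ` T. a <# S) \<noteq> {}"
    using T h by (intro large_translates_meet[OF large]) auto
  then obtain y where y: "\<And>a. a \<in> T \<union> (\<lambda>t. t \<otimes> inv h) ` T \<Longrightarrow> y \<in> a <# S"
    by blast
  have untranslate: "inv a \<otimes> y \<in> S" if translate: "a \<in> T \<union> (\<lambda>t. t \<otimes> inv h) ` T" for a
  proof -
    have a: "a \<in> carrier G" using translate T h by auto
    obtain s where "s \<in> S" "y = a \<otimes> s" using y[OF translate] by (auto simp: l_coset_def)
    then show ?thesis using a S by (auto simp: m_assoc[symmetric])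
  qed
  have "y \<in> carrier G" using y T S l_coset_subset_G by blast
  moreover have "inv t \<otimes> y \<in> S \<and> h \<otimes> (inv t \<otimes> y) \<in> S" if t: "t \<in> T" for t
  proof -
    have "h \<otimes> (inv t \<otimes> y) = inv (t \<otimes> inv h) \<otimes> y"
      using t T h \<open>y \<in> carrier G\<close> by (auto simp: inv_mult_group m_assoc)
    then show ?thesis using untranslate[of t] untranslate[of "t \<otimes> inv h"] t by auto
  qed
  ultimately show ?thesis by blast
qed

lemma (in group) large_meets_subgroup_and_translate:
  assumes large: "large G S" and S: "S \<subseteq> carrier G"
    and H: "subgroup H G" and fin: "finite (rcosets H)" and h: "h \<in> carrier G"
  shows "\<exists>s \<in> S \<inter> H. h \<otimes> s \<in> S"
proof -
  \<comment> \<open>equal colours of t and y mean inv t \<otimes> y \<in> H\<close>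
  define colour where "colour y = H #> inv y" for y
  define rep where "rep = inv_into (carrier G) colour"
  have "colour ` carrier G \<subseteq> rcosets H"
    using subgroup.subset[OF H] by (auto simp: colour_def intro: rcosetsI)
  then have reps: "finite (rep ` colour ` carrier G)" "rep ` colour ` carrier G \<noteq> {}"
    "rep ` colour ` carrier G \<subseteq> carrier G"
    using fin finite_subset carrier_not_empty by (auto simp: rep_def inv_into_into)
  then obtain y where y: "y \<in> carrier G"
    and translates: "\<And>t. t \<in> rep ` colour ` carrier G \<Longrightarrow> inv t \<otimes> y \<in> S \<and> h \<otimes> (inv t \<otimes> y) \<in> S"
    using large_common_translate[OF large S reps h] by blast
  define t where "t = rep (colour y)"
  have t: "t \<in> rep ` colour ` carrier G" "t \<in> carrier G" "colour t = colour y"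
    using y by (auto simp: t_def rep_def inv_into_into f_inv_into_f)
  have "inv t \<in> H #> inv t" using t(2) H by (simp add: rcos_self)
  then have "inv t \<in> H #> inv y" using t(3) by (simp add: colour_def)
  then have "inv t \<otimes> y \<in> H"
    using subgroup.rcos_module_imp[OF H is_group inv_closed[OF y]] y by simp
  then show ?thesis using translates[OF t(1)] by blast
qed

definition centralising_tuples :: "('a, 'b) monoid_scheme \<Rightarrow> 'a list set \<Rightarrow> 'a set \<Rightarrow> 'a list set"
  where "centralising_tuples G1 G S = {s \<in> G. \<forall>a \<in> S. set s \<subseteq> centraliser G1 a}"

lemma subgroup_centralising_tuples:
  assumes G1: "group G1" and G: "subgroup G (pow_group G1 n)" and S: "S \<subseteq> carrier G1"
  shows "subgroup (centralising_tuples G1 G S) ((pow_group G1 n)\<lparr>carrier := G\<rparr>)"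
proof -
  interpret G1: group G1 by (fact G1)
  interpret P: group "pow_group G1 n" by (rule G1.group_pow_group)
  have centr: "\<And>a. a \<in> S \<Longrightarrow> subgroup (centraliser G1 a) G1"
    using S G1.subgroup_centraliser by blast
  have "subgroup (centralising_tuples G1 G S) (pow_group G1 n)"
  proof (rule P.subgroupI)
    show "centralising_tuples G1 G S \<subseteq> carrier (pow_group G1 n)"
      using subgroup.subset[OF G] by (auto simp: centralising_tuples_def)
    have "\<one>\<^bsub>pow_group G1 n\<^esub> \<in> G" by (rule subgroup.one_closed[OF G])
    then show "centralising_tuples G1 G S \<noteq> {}"
      using subgroup.one_closed[OF centr] by (auto simp: centralising_tuples_def)
  next
    fix s assume s: "s \<in> centralising_tuples G1 G S"
    then have inv: "inv\<^bsub>pow_group G1 n\<^esub> s = map (m_inv G1) s"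
      using subgroup.subset[OF G] unfolding centralising_tuples_def by (blast intro: G1.pow_group_inv)
    have "inv\<^bsub>pow_group G1 n\<^esub> s \<in> G"
      using s subgroup.m_inv_closed[OF G] by (auto simp: centralising_tuples_def)
    moreover have "\<forall>a \<in> S. set (inv\<^bsub>pow_group G1 n\<^esub> s) \<subseteq> centraliser G1 a"
      using s subgroup.m_inv_closed[OF centr] by (auto simp: centralising_tuples_def inv)
    ultimately show "inv\<^bsub>pow_group G1 n\<^esub> s \<in> centralising_tuples G1 G S"
      by (simp add: centralising_tuples_def)
  next
    fix s t assume "s \<in> centralising_tuples G1 G S" "t \<in> centralising_tuples G1 G S"
    then show "s \<otimes>\<^bsub>pow_group G1 n\<^esub> t \<in> centralising_tuples G1 G S"
      using subgroup.m_closed[OF G] subgroup.m_closed[OF centr]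
      by (auto simp: centralising_tuples_def set_zip subset_eq)
  qed
  then show ?thesis
    using P.subgroup_incl[OF _ G] by (auto simp: centralising_tuples_def)
qed

lemma finite_index_centralising_tuples:
  assumes FC: "FC_group G1" and G: "subgroup G (pow_group G1 n)"
    and S: "finite S" "S \<subseteq> carrier G1"
  shows "finite (rcosets\<^bsub>(pow_group G1 n)\<lparr>carrier := G\<rparr>\<^esub> centralising_tuples G1 G S)"
proof -
  interpret G1: group G1 using FC by (simp add: FC_group_def)
  interpret P: group "pow_group G1 n" by (rule G1.group_pow_group)
  interpret Q: group "(pow_group G1 n)\<lparr>carrier := G\<rparr>" by (rule P.subgroup_imp_group[OF G])
  define colour where "colour y = map (\<lambda>yi. \<lambda>a \<in> S. centraliser G1 a #>\<^bsub>G1\<^esub> yi) y" for y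
  have G_carrier: "\<And>y. y \<in> G \<Longrightarrow> length y = n \<and> set y \<subseteq> carrier G1"
    using subgroup.subset[OF G] by auto
  show ?thesis
  proof (rule Q.finite_rcosets_by_colouring[OF subgroup_centralising_tuples[OF G1.is_group G S(2)]])
    have "colour ` G \<subseteq>
        {cs. set cs \<subseteq> (\<Pi>\<^sub>E a \<in> S. rcosets\<^bsub>G1\<^esub> (centraliser G1 a)) \<and> length cs = n}"
      using G_carrier by (force simp: colour_def RCOSETS_def)
    moreover have "finite (\<Pi>\<^sub>E a \<in> S. rcosets\<^bsub>G1\<^esub> (centraliser G1 a))"
      using FC S by (auto simp: FC_group_def intro!: finite_PiE)
    ultimately show "finite (colour ` carrier ((pow_group G1 n)\<lparr>carrier := G\<rparr>))"
      by (simp add: finite_subset finite_lists_length_eq)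
  next
    fix x y
    assume "x \<in> carrier ((pow_group G1 n)\<lparr>carrier := G\<rparr>)"
      and "y \<in> carrier ((pow_group G1 n)\<lparr>carrier := G\<rparr>)"
      and same: "colour x = colour y"
    then have x: "x \<in> G" and y: "y \<in> G" by simp_all
    have "x ! i \<otimes>\<^bsub>G1\<^esub> inv\<^bsub>G1\<^esub> (y ! i) \<in> centraliser G1 a" if "i < n" "a \<in> S" for i a
    proof -
      have "(colour x ! i) a = (colour y ! i) a" using same by simp
      then have "centraliser G1 a #>\<^bsub>G1\<^esub> x ! i = centraliser G1 a #>\<^bsub>G1\<^esub> y ! i"
        using that G_carrier[OF x] G_carrier[OF y] by (simp add: colour_def)
      moreover have "x ! i \<in> carrier G1" "y ! i \<in> carrier G1"
        using that G_carrier[OF x] G_carrier[OF y] by auto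
      moreover have "subgroup (centraliser G1 a) G1" using that S G1.subgroup_centraliser by blast
      ultimately show ?thesis
        by (metis G1.rcos_self subgroup.rcos_module_imp G1.is_group)
    qed
    moreover have "inv\<^bsub>(pow_group G1 n)\<lparr>carrier := G\<rparr>\<^esub> y = map (m_inv G1) y"
      using P.m_inv_consistent[OF G y] G_carrier[OF y] by (simp add: G1.pow_group_inv)
    moreover have "x \<otimes>\<^bsub>(pow_group G1 n)\<lparr>carrier := G\<rparr>\<^esub> inv\<^bsub>(pow_group G1 n)\<lparr>carrier := G\<rparr>\<^esub> y \<in> G"
      using Q.m_closed[OF _ Q.inv_closed] x y by simp
    ultimately show "x \<otimes>\<^bsub>(pow_group G1 n)\<lparr>carrier := G\<rparr>\<^esub> inv\<^bsub>(pow_group G1 n)\<lparr>carrier := G\<rparr>\<^esub> y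
        \<in> centralising_tuples G1 G S"
      using G_carrier[OF x] G_carrier[OF y] by (auto simp: centralising_tuples_def set_zip)
  qed
qed

lemma eval_word_eq_at_one_if_large_fibre:
  assumes FC: "FC_group G1" and G: "subgroup G (pow_group G1 n)"
    and w: "word_in n m w" and g: "length g = m" "set g \<subseteq> carrier G1"
    and large: "large ((pow_group G1 n)\<lparr>carrier := G\<rparr>) {h \<in> G. eval_word G1 w h g = c}"
    and h: "h \<in> G"
  shows "eval_word G1 w h g = eval_word G1 w (replicate n \<one>\<^bsub>G1\<^esub>) g"
proof -
  interpret G1: group G1 using FC by (simp add: FC_group_def)
  interpret P: group "pow_group G1 n" by (rule G1.group_pow_group)
  interpret Q: group "(pow_group G1 n)\<lparr>carrier := G\<rparr>" by (rule P.subgroup_imp_group[OF G])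
  have G_carrier: "\<And>y. y \<in> G \<Longrightarrow> length y = n \<and> set y \<subseteq> carrier G1"
    using subgroup.subset[OF G] by auto
  define S where "S = set h \<union> set g"
  have S: "finite S" "S \<subseteq> carrier G1" using G_carrier[OF h] g by (auto simp: S_def)
  obtain s where s: "s \<in> G" "eval_word G1 w s g = c" "\<forall>a \<in> S. set s \<subseteq> centraliser G1 a"
    and hs: "map2 (\<otimes>\<^bsub>G1\<^esub>) h s \<in> G" "eval_word G1 w (map2 (\<otimes>\<^bsub>G1\<^esub>) h s) g = c"
    using Q.large_meets_subgroup_and_translate[OF large _
        subgroup_centralising_tuples[OF G1.is_group G S(2)]
        finite_index_centralising_tuples[OF FC G S], where h = h] h
    by (auto simp: centralising_tuples_def)
  have h': "length h = n" "set h \<subseteq> carrier G1" and s': "length s = n" "set s \<subseteq> carrier G1"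
    using G_carrier[OF h] G_carrier[OF s(1)] by auto
  define U where "U = eval_word G1 (filter (isl \<circ> fst) w) s g"
  have "c = eval_word G1 w h g \<otimes>\<^bsub>G1\<^esub> U"
    unfolding U_def hs(2)[symmetric]
    by (rule eval_word_mult_centralising[OF G1.is_group w h'(1) s'(1) g(1) h'(2) s'(2) g(2)])
       (use s(3) in \<open>simp add: S_def\<close>)
  moreover have "c = eval_word G1 w (replicate n \<one>\<^bsub>G1\<^esub>) g \<otimes>\<^bsub>G1\<^esub> U"
  proof -
    have "s = map2 (\<otimes>\<^bsub>G1\<^esub>) (replicate n \<one>\<^bsub>G1\<^esub>) s"
      using s' by (auto intro!: nth_equalityI simp: subset_eq all_set_conv_all_nth)
    then have "c = eval_word G1 w (map2 (\<otimes>\<^bsub>G1\<^esub>) (replicate n \<one>\<^bsub>G1\<^esub>) s) g"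
      using s(2) by simp
    also have "\<dots> = eval_word G1 w (replicate n \<one>\<^bsub>G1\<^esub>) g \<otimes>\<^bsub>G1\<^esub> U"
      unfolding U_def
      by (rule eval_word_mult_centralising[OF G1.is_group w _ s'(1) g(1) _ s'(2) g(2)])
         (use s(3) s'(2) in \<open>auto simp: S_def centraliser_def\<close>)
    finally show ?thesis .
  qed
  moreover have "U \<in> carrier G1" unfolding U_def
    by (rule eval_word_closed[OF G1.is_group word_in_filter[OF w] s'(1) g(1) s'(2) g(2)])
  moreover have "eval_word G1 w h g \<in> carrier G1"
    by (rule eval_word_closed[OF G1.is_group w h'(1) g(1) h'(2) g(2)])
  moreover have "eval_word G1 w (replicate n \<one>\<^bsub>G1\<^esub>) g \<in> carrier G1"
    by (rule eval_word_closed[OF G1.is_group w _ g(1) _ g(2)]) auto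
  ultimately show ?thesis by simp
qed

theorem theorem3p2:
  fixes G1 :: "('a, 'b) monoid_scheme" and n m :: nat and G :: "'a list set"
    and w :: "letter list" and g :: "'a list" and c :: 'a
  assumes "FC_group G1"
    and "subgroup G (pow_group G1 n)"
    and "word_in n m w"
    and "length g = m" and "set g \<subseteq> carrier G1"
    and "c \<in> carrier G1"
    and "large ((pow_group G1 n)\<lparr>carrier := G\<rparr>) {h \<in> G. eval_word G1 w h g = c}"
  shows "\<forall>h \<in> G. eval_word G1 w h g = c"
proof
  fix h assume "h \<in> G"
  have "monoid ((pow_group G1 n)\<lparr>carrier := G\<rparr>)"
    using assms(1,2) by (simp add: FC_group_def group.group_pow_group group.subgroup_imp_group group.is_monoid)
  then obtain s where "s \<in> G" "eval_word G1 w s g = c"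
    using large_nonempty[OF _ assms(7)] by blast
  with \<open>h \<in> G\<close> show "eval_word G1 w h g = c"
    using eval_word_eq_at_one_if_large_fibre[OF assms(1-5) assms(7)] by metis
qed

end
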